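(* Let $h:[0,1]\to(0,\infty)$ and $f:[0,\infty)\to[0,\infty)$ be continuously differentiable, suppose there is $t_0\ge 0$ with $f(t)>0$ for all $t\ge t_0$ and $f\in C^2([t_0,\infty))$, and put $g(t)=\log f(t)$ for $t\ge t_0$. Assume condition (H1) stated in the context. Let $(\lambda_n,\mu_n,u_n)\in(0,\infty)\times(0,\infty)\times C^2([0,1])$, $n\in\mathbb{N}$, satisfy $$-u_n''-\tfrac1r u_n'=\lambda_n h(r) f(u_n),\quad u_n>0 \text{ in }(0,1),\qquad u_n(0)=\mu_n,\ u_n'(0)=0=u_n(1),$$ and suppose $\mu_n\to\infty$. For each large $n$ define $\gamma_{0,n}>0$ by $\lambda_n h(0) f'(\mu_n)\gamma_{0,n}^2=1$ and $z_{0,n}(r)=g'(\mu_n)(u_n(\gamma_{0,n}r)-\mu_n)$ for $r\in[0,1/\gamma_{0,n}]$. Let $z_0(r)=\log\frac{64}{(8+r^2)^2}$ for $r\ge0$. Then $\gamma_{0,n}\to0$ as $n\to\infty$, and, up to a subsequence, there exists a sequence $(\rho_{0,n})\subset(0,1)$ such that $u_n(\rho_{0,n})/\mu_n\to1$, $\rho_{0,n}\to0$, $\rho_{0,n}/\gamma_{0,n}\to\infty$, $\|z_{0,n}-z_0\|_{C^2([0,\rho_{0,n}/\gamma_{0,n}])}\to0$ as $n\to\infty$, and $$\lim_{n\to\infty} g'(\mu_n)\int_0^{\rho_{0,n}}\lambda_n h f(u_n)\,r\,dr=4=\lim_{n\to\infty}\int_0^{\rho_{0,n}}\lambda_n h 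f'(u_n)\,r\,dr.$$
   Context: Condition (H1): (i) $g'(t)>0$ and $g''(t)>0$ for all $t\ge t_0$, and there is a pair $(q,p)$ with either $q=1$ and $p\in(0,\infty]$, or $q\in(1,\infty)$ and $p\in(0,\infty)$, such that $\lim_{t\to\infty}\frac{g'(t)^2}{g(t)g''(t)}=q$ and $\lim_{t\to\infty}\frac{tg'(t)}{g(t)}=p$; (ii) if $q=1$, then $tg'(t)/g(t)$ is nondecreasing on $[t_0,\infty)$ and there exist $k\in\mathbb{N}$ and $\hat g\in C^2([t_0,\infty))$ with $f(t)=\exp_k(\hat g(t))$ and $\hat g'(t)/\hat g(t)$ nonincreasing for all $t\ge t_0$, where $\exp_1=\exp$ and $\exp_k(t)=\exp_{k-1}(\exp(t))$. In integrals, $h$ and $f(u_n)$ are evaluated at $r$, i.e. $h=h(r)$, $f(u_n)=f(u_n(r))$. *)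

theory Defs
  imports "HOL-Analysis.Analysis"
begin

fun exp_iter :: "nat \<Rightarrow> real \<Rightarrow> real" where
  "exp_iter 0 t = t"
| "exp_iter (Suc k) t = exp_iter k (exp t)"

definition d1 :: "real set \<Rightarrow> (real \<Rightarrow> real) \<Rightarrow> real \<Rightarrow> real" where
  "d1 S z x = vector_derivative z (at x within S)"

definition d2 :: "real set \<Rightarrow> (real \<Rightarrow> real) \<Rightarrow> real \<Rightarrow> real" where
  "d2 S z x = vector_derivative (d1 S z) (at x within S)"

definition C2_norm :: "real set \<Rightarrow> (real \<Rightarrow> real) \<Rightarrow> real" where
  "C2_norm S z = (SUP x\<in>S. \<bar>z x\<bar>) + (SUP x\<in>S. \<bar>d1 S z x\<bar>) + (SUP x\<in>S. \<bar>d2 S z x\<bar>)"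

text \<open>Condition (H1) for f with g = log f on [t0,\<infinity>); gd, gdd are g', g''.\<close>
definition H1 :: "(real \<Rightarrow> real) \<Rightarrow> (real \<Rightarrow> real) \<Rightarrow> (real \<Rightarrow> real) \<Rightarrow> real \<Rightarrow> bool" where
  "H1 f gd gdd t0 \<longleftrightarrow>
    (\<forall>t\<ge>t0. gd t > 0 \<and> gdd t > 0) \<and>
    (\<exists>q. ((\<lambda>t. (gd t)\<^sup>2 / (ln (f t) * gdd t)) \<longlongrightarrow> q) at_top \<and>
      ((q = 1 \<and> ((\<exists>p>0. ((\<lambda>t. t * gd t / ln (f t)) \<longlongrightarrow> p) at_top)
                 \<or> filterlim (\<lambda>t. t * gd t / ln (f t)) at_top at_top))
       \<or> (q > 1 \<and> (\<exists>p>0. ((\<lambda>t. t * gd t / ln (f t)) \<longlongrightarrow> p) at_top))) \<and>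
      (q = 1 \<longrightarrow>
         mono_on {t0..} (\<lambda>t. t * gd t / ln (f t)) \<and>
         (\<exists>k::nat. k \<ge> 1 \<and> (\<exists>gh gh' gh''.
             (\<forall>t\<ge>t0. (gh has_real_derivative gh' t) (at t within {t0..}) \<and>
                      (gh' has_real_derivative gh'' t) (at t within {t0..})) \<and>
             continuous_on {t0..} gh'' \<and>
             (\<forall>t\<ge>t0. f t = exp_iter k (gh t)) \<and>
             antimono_on {t0..} (\<lambda>t. gh' t / gh t)))))"

end

theory Submission
  imports Defs "HOL-Real_Asymp.Real_Asymp"
begin

(* Normalising by g'(mu_n) and rescaling by gamma_n turns the equation into the radial problem
     z_n'' + z_n'/s = - (h (gamma_n s) / h 0) * f (u_n (gamma_n s)) / f mu_n,   z_n 0 = z_n' 0 = 0.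
   The flux identity r u_n'(r) = - int_0^r lam_n h f(u_n) t dt bounds mu_n - u_n quadratically,
   which gives gamma_n -> 0 and the a priori bound - C s^2 <= z_n s <= 0. So on [0, R] the values
   of u_n stay in a window of length O(1/g'(mu_n)) below mu_n, on which ln f is linear up to o(1)
   because g''/g'^2 -> 0 by (H1). Hence the right-hand side is exp z_n + o(1), and a Gronwall
   estimate for the linearised radial equation gives z_n -> z_0 in C^2([0, R]), where z_0 is the
   radial solution of the Liouville equation. The flux identity turns this into
   g'(mu_n) int_0^(gamma_n R) lam_n h f(u_n) r dr -> - R z_0'(R) = 4 R^2 / (8 + R^2); the f' integral
   is squeezed between the values of g' at the ends of the window. Choosing R = k + 1 along a
   diagonal subsequence and rho_n = gamma_n R yields the theorem. *)

lemma has_real_derivative_at_if_within_atLeast: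
  "(f has_real_derivative D) (at x within {a..}) \<Longrightarrow> a < x \<Longrightarrow> (f has_real_derivative D) (at x)"
  using at_within_interior[of x "{a..}"] interior_real_atLeast[of a] by auto

lemma has_real_derivative_at_if_within_Icc:
  "(f has_real_derivative D) (at x within {a..b}) \<Longrightarrow> a < x \<Longrightarrow> x < b \<Longrightarrow> (f has_real_derivative D) (at x)"
  using at_within_Icc_at[of a x b] by auto

lemma scaled_interval_subset:
  fixes a R :: real
  assumes "0 < a" "a * R \<le> 1"
  shows "(*) a ` {0..R} \<subseteq> {0..1}"
proof
  fix y assume "y \<in> (*) a ` {0..R}"
  then obtain x where x: "0 \<le> x" "x \<le> R" "y = a * x"
    by auto
  then have "a * x \<le> a * R"
    using assms by (intro mult_left_mono) auto
  moreover have "0 \<le> a * x"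
    using assms x by simp
  ultimately show "y \<in> {0..1}"
    unfolding x(3) atLeastAtMost_iff using assms(2) by linarith
qed

lemma has_real_derivative_scaled_within:
  fixes v v' :: "real \<Rightarrow> real"
  assumes a: "0 < a" "a * R \<le> 1" and s: "s \<in> {0..R}"
    and v: "\<And>r. r \<in> {0..1} \<Longrightarrow> (v has_real_derivative v' r) (at r within {0..1})"
  shows "((\<lambda>s. v (a * s)) has_real_derivative v' (a * s) * a) (at s within {0..R})"
proof -
  have "(v has_real_derivative v' (a * s)) (at (a * s) within (*) a ` {0..R})"
    using DERIV_subset[OF v scaled_interval_subset[OF a]] scaled_interval_subset[OF a] s by blast
  from DERIV_image_chain[OF this] show ?thesis
    by (auto simp: o_def intro: DERIV_cmult_Id)
qed

lemma abs_diff_le_if_deriv_dominated: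
  fixes \<phi> \<phi>' \<Phi> \<Phi>' :: "real \<Rightarrow> real"
  assumes ab: "a \<le> b" and cont: "continuous_on {a..b} \<phi>" "continuous_on {a..b} \<Phi>"
    and deriv: "\<And>t. a < t \<Longrightarrow> t < b \<Longrightarrow> (\<phi> has_real_derivative \<phi>' t) (at t)"
      "\<And>t. a < t \<Longrightarrow> t < b \<Longrightarrow> (\<Phi> has_real_derivative \<Phi>' t) (at t)"
    and dominated: "\<And>t. a < t \<Longrightarrow> t < b \<Longrightarrow> \<bar>\<phi>' t\<bar> \<le> \<Phi>' t"
  shows "\<bar>\<phi> b - \<phi> a\<bar> \<le> \<Phi> b - \<Phi> a"
proof -
  have "(\<lambda>t. \<Phi> t + \<sigma> * \<phi> t) a \<le> (\<lambda>t. \<Phi> t + \<sigma> * \<phi> t) b"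
    if \<sigma>: "\<bar>\<sigma>\<bar> = 1" for \<sigma> :: real
  proof (rule DERIV_nonneg_imp_increasing_open[OF ab])
    fix t assume t: "a < t" "t < b"
    have "\<sigma> * \<phi>' t \<ge> - \<Phi>' t"
      using dominated[OF t] \<sigma> by (auto simp: abs_le_iff abs_if split: if_splits)
    then show "\<exists>y. ((\<lambda>t. \<Phi> t + \<sigma> * \<phi> t) has_real_derivative y) (at t) \<and> 0 \<le> y"
      using deriv[OF t] by (intro exI[of _ "\<Phi>' t + \<sigma> * \<phi>' t"]) (auto intro!: derivative_eq_intros)
  qed (auto intro!: continuous_intros cont)
  from this[of 1] this[of "-1"] show ?thesis
    by auto
qed

lemma MVT_le:
  fixes \<phi> \<phi>' :: "real \<Rightarrow> real"
  assumes "a \<le> b" and "\<And>x. a \<le> x \<Longrightarrow> x \<le> b \<Longrightarrow> (\<phi> has_real_derivative \<phi>' x) (at x)"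
  obtains \<xi> where "a \<le> \<xi>" "\<xi> \<le> b" "\<phi> b - \<phi> a = (b - a) * \<phi>' \<xi>"
proof (cases "a = b")
  case False
  with MVT2[of a b \<phi> \<phi>'] assms show ?thesis
    by (metis less_eq_real_def that)
qed (use that in auto)

lemma radial_flux_bound:
  fixes w D :: "real \<Rightarrow> real"
  assumes t: "0 < t" and cont: "continuous_on {0..t} w"
    and flux: "\<And>r. 0 < r \<Longrightarrow> r < t \<Longrightarrow> ((\<lambda>r. r * w r) has_real_derivative - (r * D r)) (at r)"
    and bound: "\<And>r. 0 < r \<Longrightarrow> r < t \<Longrightarrow> \<bar>D r\<bar> \<le> B"
  shows "\<bar>w t\<bar> \<le> B * t / 2"
proof -
  have "\<bar>t * w t - 0 * w 0\<bar> \<le> B * t\<^sup>2 / 2 - B * 0\<^sup>2 / 2"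
  proof (rule abs_diff_le_if_deriv_dominated[where \<phi>' = "\<lambda>r. - (r * D r)" and \<Phi>' = "\<lambda>r. B * r"])
    fix r assume "0 < r" "r < t"
    then show "\<bar>- (r * D r)\<bar> \<le> B * r"
      using bound[of r] by (simp add: abs_mult mult.commute mult_left_mono)
  qed (use t in \<open>auto intro!: continuous_intros derivative_eq_intros cont flux\<close>)
  then have "t * \<bar>w t\<bar> \<le> t * (B * t / 2)"
    using t by (simp add: abs_mult power2_eq_square)
  then show ?thesis
    using t by simp
qed

lemma abs_exp_diff_le_nonpos:
  fixes x y :: real
  assumes "x \<le> 0" "y \<le> 0"
  shows "\<bar>exp x - exp y\<bar> \<le> \<bar>x - y\<bar>"
proof -
  have *: "exp p - exp q \<le> p - q" if "q \<le> p" "p \<le> 0" for p q :: real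
  proof -
    have "exp p - exp q = exp p * (1 - exp (q - p))"
      by (simp add: algebra_simps exp_diff)
    also have "\<dots> \<le> 1 - exp (q - p)"
      using that by (intro mult_left_le_one_le) auto
    also have "\<dots> \<le> p - q"
      using exp_ge_add_one_self[of "q - p"] by linarith
    finally show ?thesis .
  qed
  show ?thesis
    using *[of y x] *[of x y] assms by (cases "y \<le> x") auto
qed

lemma strict_bound_continuation:
  fixes W \<psi> :: "real \<Rightarrow> real"
  assumes cont: "continuous_on {0..R} W" "continuous_on {0..R} \<psi>"
    and start: "\<bar>W 0\<bar> < \<psi> 0"
    and step: "\<And>s. 0 < s \<Longrightarrow> s \<le> R \<Longrightarrow> (\<And>\<tau>. 0 \<le> \<tau> \<Longrightarrow> \<tau> < s \<Longrightarrow> \<bar>W \<tau>\<bar> < \<psi> \<tau>) \<Longrightarrow> \<bar>W s\<bar> < \<psi> s"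
  shows "\<forall>s\<in>{0..R}. \<bar>W s\<bar> < \<psi> s"
proof (rule ccontr)
  assume fails: "\<not> (\<forall>s\<in>{0..R}. \<bar>W s\<bar> < \<psi> s)"
  define S where "S = {0..R} \<inter> (\<lambda>s. \<psi> s - \<bar>W s\<bar>) -` {..0}"
  have "S \<noteq> {}"
    using fails by (auto simp: S_def not_less)
  moreover have bdd: "bdd_below S"
    by (auto simp: S_def bdd_below_def)
  moreover have "closed S"
    unfolding S_def by (intro continuous_closed_preimage) (auto intro!: continuous_intros cont)
  ultimately have "Inf S \<in> S"
    by (rule closed_contains_Inf)
  then have s: "0 \<le> Inf S" "Inf S \<le> R" "\<psi> (Inf S) \<le> \<bar>W (Inf S)\<bar>"
    by (auto simp: S_def)
  have below: "\<bar>W \<tau>\<bar> < \<psi> \<tau>" if "0 \<le> \<tau>" "\<tau> < Inf S" for \<tau>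
    using cInf_lower[OF _ bdd, of \<tau>] that s by (force simp: S_def)
  have "0 < Inf S"
    using s start by (cases "Inf S = 0") auto
  with step[OF _ s(2) below] s(3) show False
    by auto
qed

lemma tendsto_0_if_eventually_abs_le:
  fixes X :: "'a \<Rightarrow> real"
  assumes "\<And>e. 0 < e \<Longrightarrow> \<forall>\<^sub>F n in F. \<bar>X n\<bar> \<le> e"
  shows "(X \<longlongrightarrow> 0) F"
proof (rule tendstoI)
  fix e :: real assume "0 < e"
  from assms[of "e / 2"] \<open>0 < e\<close> show "\<forall>\<^sub>F n in F. dist (X n) 0 < e"
    by (auto elim: eventually_mono)
qed

lemma tendsto_if_abs_diff_le:
  fixes x y b :: "nat \<Rightarrow> real"
  assumes "\<And>n. \<bar>x n - y n\<bar> \<le> b n" "b \<longlonglongrightarrow> 0" "y \<longlonglongrightarrow> L"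
  shows "x \<longlonglongrightarrow> L"
proof -
  have "(\<lambda>n. x n - y n) \<longlonglongrightarrow> 0"
    by (rule Lim_null_comparison[OF _ assms(2)]) (use assms(1) in \<open>simp add: always_eventually\<close>)
  from tendsto_add[OF this assms(3)] show ?thesis
    by simp
qed

lemma eventually_diagonal_subseq:
  assumes "\<And>k. eventually (P k) sequentially"
  obtains s :: "nat \<Rightarrow> nat" where "strict_mono s" "\<And>k. P k (s k)"
proof -
  have "\<forall>k. \<exists>N. \<forall>n\<ge>N. P k n"
    using assms unfolding eventually_sequentially by blast
  then obtain N where N: "\<And>k n. n \<ge> N k \<Longrightarrow> P k n"
    by metis
  define s where "s k = (\<Sum>i\<le>k. N i) + k" for k
  have "strict_mono s"
    unfolding strict_mono_Suc_iff by (simp add: s_def)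
  moreover have "P k (s k)" for k
    using N[of k "s k"] member_le_sum[of k "{..k}" N] by (simp add: s_def)
  ultimately show ?thesis
    by (rule that)
qed

lemma d1_d2_eq:
  fixes F F' F'' :: "real \<Rightarrow> real"
  assumes R: "0 < R" and x: "x \<in> {0..R}"
    and F': "\<And>x. x \<in> {0..R} \<Longrightarrow> (F has_real_derivative F' x) (at x within {0..R})"
    and F'': "\<And>x. x \<in> {0..R} \<Longrightarrow> (F' has_real_derivative F'' x) (at x within {0..R})"
  shows "d1 {0..R} F x = F' x" and "d2 {0..R} F x = F'' x"
proof -
  have d1: "d1 {0..R} F y = F' y" if y: "y \<in> {0..R}" for y
    unfolding d1_def using F'[OF y]
    by (intro vector_derivative_within_closed_interval[OF R y])
      (simp add: has_real_derivative_iff_has_vector_derivative)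
  then show "d1 {0..R} F x = F' x"
    using x .
  have "(d1 {0..R} F has_real_derivative F'' x) (at x within {0..R})"
    by (rule has_field_derivative_transform_within[OF F''[OF x], where d = 1]) (use x d1 in auto)
  then show "d2 {0..R} F x = F'' x"
    unfolding d2_def by (intro vector_derivative_within_closed_interval[OF R x])
      (simp add: has_real_derivative_iff_has_vector_derivative)
qed

lemma SUP_abs_le:
  fixes G :: "real \<Rightarrow> real"
  assumes R: "0 \<le> R" and G: "\<And>x. x \<in> {0..R} \<Longrightarrow> \<bar>G x\<bar> \<le> B"
  shows "0 \<le> (SUP x\<in>{0..R}. \<bar>G x\<bar>) \<and> (SUP x\<in>{0..R}. \<bar>G x\<bar>) \<le> B"
proof
  have "\<bar>G 0\<bar> \<le> (SUP x\<in>{0..R}. \<bar>G x\<bar>)"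
    by (rule cSUP_upper) (use R G in \<open>auto intro!: bdd_aboveI2[where M = B]\<close>)
  then show "0 \<le> (SUP x\<in>{0..R}. \<bar>G x\<bar>)"
    by linarith
  show "(SUP x\<in>{0..R}. \<bar>G x\<bar>) \<le> B"
    by (rule cSUP_least) (use R G in auto)
qed

lemma C2_norm_le:
  fixes F F' F'' :: "real \<Rightarrow> real"
  assumes R: "0 < R"
    and F': "\<And>x. x \<in> {0..R} \<Longrightarrow> (F has_real_derivative F' x) (at x within {0..R})"
    and F'': "\<And>x. x \<in> {0..R} \<Longrightarrow> (F' has_real_derivative F'' x) (at x within {0..R})"
    and bound: "\<And>x. x \<in> {0..R} \<Longrightarrow> \<bar>F x\<bar> \<le> B \<and> \<bar>F' x\<bar> \<le> B \<and> \<bar>F'' x\<bar> \<le> B"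
  shows "\<bar>C2_norm {0..R} F\<bar> \<le> 3 * B"
proof -
  have "C2_norm {0..R} F = (SUP x\<in>{0..R}. \<bar>F x\<bar>) + (SUP x\<in>{0..R}. \<bar>F' x\<bar>) + (SUP x\<in>{0..R}. \<bar>F'' x\<bar>)"
    unfolding C2_norm_def using d1_d2_eq[OF R _ F' F'']
    by (intro arg_cong2[where f = "(+)"] SUP_cong refl) auto
  moreover have "0 \<le> (SUP x\<in>{0..R}. \<bar>F x\<bar>) \<and> (SUP x\<in>{0..R}. \<bar>F x\<bar>) \<le> B"
    "0 \<le> (SUP x\<in>{0..R}. \<bar>F' x\<bar>) \<and> (SUP x\<in>{0..R}. \<bar>F' x\<bar>) \<le> B"
    "0 \<le> (SUP x\<in>{0..R}. \<bar>F'' x\<bar>) \<and> (SUP x\<in>{0..R}. \<bar>F'' x\<bar>) \<le> B"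
    using R bound by (intro SUP_abs_le; auto)+
  ultimately have "0 \<le> C2_norm {0..R} F" "C2_norm {0..R} F \<le> 3 * B"
    by linarith+
  then show ?thesis
    by simp
qed

section \<open>Stability of the linearised radial equation\<close>

lemma abs_le_at_0_if_continuous:
  fixes g :: "real \<Rightarrow> real"
  assumes R: "0 < R" and g: "continuous_on {0..R} g" and bound: "\<And>t. 0 < t \<Longrightarrow> t \<le> R \<Longrightarrow> \<bar>g t\<bar> \<le> c"
  shows "\<bar>g 0\<bar> \<le> c"
proof (rule tendsto_upperbound)
  show "((\<lambda>t. \<bar>g t\<bar>) \<longlongrightarrow> \<bar>g 0\<bar>) (at_right 0)"
    using g R by (intro tendsto_rabs) (simp add: continuous_on_def at_within_Icc_at_right[symmetric])
  show "\<forall>\<^sub>F t in at_right 0. \<bar>g t\<bar> \<le> c"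
    using bound R by (auto simp: eventually_at_right[OF R])
qed simp

locale radial_ode =
  fixes R :: real and W W' W'' D :: "real \<Rightarrow> real"
  assumes R_pos: "0 < R"
    and W': "\<And>s. s \<in> {0..R} \<Longrightarrow> (W has_real_derivative W' s) (at s within {0..R})"
    and W'': "\<And>s. s \<in> {0..R} \<Longrightarrow> (W' has_real_derivative W'' s) (at s within {0..R})"
    and W''_cont: "continuous_on {0..R} W''"
    and initial: "W 0 = 0" "W' 0 = 0"
    and ode: "\<And>s. 0 < s \<Longrightarrow> s \<le> R \<Longrightarrow> W'' s = - D s - W' s / s"
begin

lemma W_cont: "continuous_on {0..R} W"
  using W' by (rule DERIV_continuous_on)

lemma W'_cont: "continuous_on {0..R} W'"
  using W'' by (rule DERIV_continuous_on)

lemma W_at: "0 < s \<Longrightarrow> s < R \<Longrightarrow> (W has_real_derivative W' s) (at s)"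
  using W' by (intro has_real_derivative_at_if_within_Icc[of _ _ _ 0 R]) auto

lemma W'_bound:
  assumes t: "0 < t" "t \<le> R" and D: "\<And>s. 0 < s \<Longrightarrow> s < t \<Longrightarrow> \<bar>D s\<bar> \<le> B"
  shows "\<bar>W' t\<bar> \<le> B * t / 2"
proof (rule radial_flux_bound[OF t(1) _ _ D])
  show "continuous_on {0..t} W'"
    using W'_cont t by (auto intro: continuous_on_subset)
next
  fix s assume s: "0 < s" "s < t"
  then have "(W' has_real_derivative W'' s) (at s)"
    using W'' t by (intro has_real_derivative_at_if_within_Icc[of _ _ _ 0 R]) auto
  from DERIV_mult[OF DERIV_ident this]
  have "((\<lambda>r. r * W' r) has_real_derivative 1 * W' s + W'' s * s) (at s)" .
  moreover have "1 * W' s + W'' s * s = - (s * D s)"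
    using ode[of s] s t by (simp add: field_simps)
  ultimately show "((\<lambda>r. r * W' r) has_real_derivative - (s * D s)) (at s)"
    by simp
qed

text \<open>Continuous induction with the barrier \<open>\<psi> s = 2 \<eta> exp (R s)\<close>: while \<open>\<bar>W\<bar> < \<psi>\<close>,
  \<open>W'_bound\<close> gives \<open>\<bar>W'\<bar> \<le> R \<psi> = \<psi>'\<close>, so \<open>W\<close> cannot catch up with \<open>\<psi>\<close>.\<close>
lemma W_exp_bound:
  assumes \<eta>: "0 < \<eta>" and D: "\<And>s. s \<in> {0..R} \<Longrightarrow> \<bar>D s\<bar> \<le> \<eta> + \<bar>W s\<bar>"
  shows "\<forall>s\<in>{0..R}. \<bar>W s\<bar> < 2 * \<eta> * exp (R * s)"
proof (rule strict_bound_continuation)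
  define \<psi> where "\<psi> s = 2 * \<eta> * exp (R * s)" for s
  have \<psi>_mono: "\<psi> s \<le> \<psi> t" if "s \<le> t" for s t
    using \<eta> R_pos that by (simp add: \<psi>_def)
  fix s assume s: "0 < s" "s \<le> R"
    and below: "\<And>\<tau>. 0 \<le> \<tau> \<Longrightarrow> \<tau> < s \<Longrightarrow> \<bar>W \<tau>\<bar> < 2 * \<eta> * exp (R * \<tau>)"
  have "\<bar>W s - W 0\<bar> \<le> \<psi> s - \<psi> 0"
  proof (rule abs_diff_le_if_deriv_dominated[where \<phi>' = W' and \<Phi>' = "\<lambda>x. R * \<psi> x"])
    fix x assume x: "0 < x" "x < s"
    have "\<bar>W' x\<bar> \<le> (\<eta> + \<psi> x) * x / 2"
    proof (rule W'_bound)
      fix \<tau> assume "0 < \<tau>" "\<tau> < x"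
      then show "\<bar>D \<tau>\<bar> \<le> \<eta> + \<psi> x"
        using D[of \<tau>] below[of \<tau>] \<psi>_mono[of \<tau> x] x s by (auto simp: \<psi>_def)
    qed (use x s in auto)
    also have "\<dots> \<le> (\<eta> + \<psi> x) * R / 2"
      using x s \<eta> \<psi>_mono[of 0 x] by (intro divide_right_mono mult_left_mono) (auto simp: \<psi>_def)
    also have "\<dots> \<le> 2 * \<psi> x * R / 2"
      using \<psi>_mono[of 0 x] x R_pos \<eta> by (intro divide_right_mono mult_right_mono) (auto simp: \<psi>_def[of 0])
    also have "\<dots> = R * \<psi> x"
      by simp
    finally show "\<bar>W' x\<bar> \<le> R * \<psi> x" .
    show "(W has_real_derivative W' x) (at x)"
      using W_at x s by auto
    show "(\<psi> has_real_derivative R * \<psi> x) (at x)"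
      unfolding \<psi>_def by (auto intro!: derivative_eq_intros)
  qed (use s in \<open>auto simp: \<psi>_def intro!: continuous_intros continuous_on_subset[OF W_cont]\<close>)
  then show "\<bar>W s\<bar> < 2 * \<eta> * exp (R * s)"
    using initial \<eta> by (simp add: \<psi>_def)
qed (use initial \<eta> in \<open>auto intro!: continuous_intros W_cont\<close>)

lemma stability:
  assumes \<eta>: "0 < \<eta>" and D: "\<And>s. s \<in> {0..R} \<Longrightarrow> \<bar>D s\<bar> \<le> \<eta> + \<bar>W s\<bar>"
    and s: "s \<in> {0..R}"
  defines "K \<equiv> (1 + 2 * exp (R\<^sup>2)) * (R + 2)"
  shows "\<bar>W s\<bar> \<le> K * \<eta> \<and> \<bar>W' s\<bar> \<le> K * \<eta> \<and> \<bar>W'' s\<bar> \<le> K * \<eta>"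
proof -
  define B where "B = (1 + 2 * exp (R\<^sup>2)) * \<eta>"
  have B: "0 \<le> B" "K * \<eta> = B * (R + 2)"
    using \<eta> by (simp_all add: B_def K_def)
  have W_le: "\<bar>W t\<bar> \<le> B - \<eta>" if t: "t \<in> {0..R}" for t
  proof -
    have "\<bar>W t\<bar> < 2 * \<eta> * exp (R * t)"
      using W_exp_bound[OF \<eta> D] t by blast
    also have "\<dots> \<le> 2 * \<eta> * exp (R\<^sup>2)"
      using t \<eta> R_pos by (simp add: power2_eq_square mult_left_mono)
    finally show ?thesis
      by (simp add: B_def algebra_simps)
  qed
  have D_le: "\<bar>D t\<bar> \<le> B" if "t \<in> {0..R}" for t
    using D[OF that] W_le[OF that] by simp
  have W'_le: "\<bar>W' t\<bar> \<le> B * t / 2" if t: "t \<in> {0..R}" for t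
  proof (cases "t = 0")
    case False
    then show ?thesis
      using t by (intro W'_bound) (auto intro: D_le)
  qed (simp add: initial)
  have W''_le: "\<bar>W'' t\<bar> \<le> 3 * B / 2" if t: "0 < t" "t \<le> R" for t
  proof -
    have "\<bar>W' t / t\<bar> \<le> B / 2"
      using W'_le[of t] t by (simp add: abs_divide divide_le_eq mult.commute)
    moreover have "\<bar>W'' t\<bar> \<le> \<bar>D t\<bar> + \<bar>W' t / t\<bar>"
      unfolding ode[OF t] using abs_triangle_ineq4[of "- D t" "W' t / t"] by (simp only: abs_minus_cancel)
    moreover have "\<bar>D t\<bar> \<le> B"
      using t by (intro D_le) auto
    ultimately show ?thesis
      by linarith
  qed
  have "\<bar>W'' s\<bar> \<le> 3 * B / 2"
    using abs_le_at_0_if_continuous[OF R_pos W''_cont W''_le] W''_le s by (cases "s = 0") auto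
  moreover have "\<bar>W' s\<bar> \<le> B * R / 2"
    using s B by (intro order_trans[OF W'_le[OF s]] divide_right_mono mult_left_mono) auto
  moreover have "\<bar>W s\<bar> \<le> B"
    using W_le[OF s] \<eta> by simp
  ultimately show ?thesis
    unfolding B(2) distrib_left using mult_nonneg_nonneg[OF B(1), of R] R_pos by linarith
qed

end

section \<open>The Liouville bubble\<close>

text \<open>The radial solution of the Liouville equation \<open>-\<Delta>z = e\<^sup>z\<close> in the plane with
  \<open>z(0) = 0\<close>.\<close>

definition bubble :: "real \<Rightarrow> real" where
  "bubble s = ln (64 / (8 + s\<^sup>2)\<^sup>2)"

definition bubble' :: "real \<Rightarrow> real" where
  "bubble' s = - 4 * s / (8 + s\<^sup>2)"

definition bubble'' :: "real \<Rightarrow> real" where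
  "bubble'' s = (4 * s\<^sup>2 - 32) / (8 + s\<^sup>2)\<^sup>2"

lemma bubble_denom_pos: "0 < 8 + (s::real)\<^sup>2"
  by (simp add: add_pos_nonneg)

lemma bubble_denom_nonzero: "8 + (s::real)\<^sup>2 \<noteq> 0"
  using bubble_denom_pos[of s] by linarith

lemma bubble_eq: "bubble s = ln 64 - 2 * ln (8 + s\<^sup>2)"
  using bubble_denom_pos[of s] by (simp add: bubble_def ln_div ln_realpow)

lemma has_real_derivative_bubble: "(bubble has_real_derivative bubble' s) (at s)"
  unfolding bubble_eq[abs_def] bubble'_def using bubble_denom_pos[of s]
  by (auto intro!: derivative_eq_intros simp: field_simps power2_eq_square)

lemma has_real_derivative_bubble': "(bubble' has_real_derivative bubble'' s) (at s)"
  unfolding bubble'_def[abs_def] bubble''_def using bubble_denom_nonzero[of s]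
  by (auto intro!: derivative_eq_intros simp: divide_simps) (simp add: algebra_simps power2_eq_square)

lemma continuous_on_bubble'': "continuous_on S bubble''"
  unfolding bubble''_def[abs_def] by (intro continuous_intros) (simp add: bubble_denom_nonzero)

lemma exp_bubble: "exp (bubble s) = 64 / (8 + s\<^sup>2)\<^sup>2"
  using bubble_denom_pos[of s] by (simp add: bubble_def)

lemma bubble_nonpos: "bubble s \<le> 0"
proof -
  have "8\<^sup>2 \<le> (8 + s\<^sup>2)\<^sup>2"
    by (intro power_mono) auto
  then show ?thesis
    unfolding exp_le_one_iff[symmetric] exp_bubble using bubble_denom_pos[of s]
    by (simp add: divide_le_eq_1_pos)
qed

lemma bubble_initial: "bubble 0 = 0" "bubble' 0 = 0"
  by (simp_all add: bubble_def bubble'_def)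

lemma bubble_ode: "s \<noteq> 0 \<Longrightarrow> bubble'' s = - exp (bubble s) - bubble' s / s"
  unfolding exp_bubble bubble'_def bubble''_def using bubble_denom_nonzero[of s]
  by (simp add: divide_simps) (simp add: algebra_simps power2_eq_square)

section \<open>Radial solutions blowing up at the origin\<close>

locale radial_blowup =
  fixes h h' f f' gd gdd :: "real \<Rightarrow> real"
    and t0 :: real
    and lam mu :: "nat \<Rightarrow> real"
    and u u' u'' :: "nat \<Rightarrow> real \<Rightarrow> real"
  assumes h_pos: "\<forall>r\<in>{0..1}. h r > 0"
    and h_C1: "\<forall>r\<in>{0..1}. (h has_real_derivative h' r) (at r within {0..1})"
    and f_nonneg: "\<forall>t\<ge>0. f t \<ge> 0"
    and f_C1: "\<forall>t\<ge>0. (f has_real_derivative f' t) (at t within {0..})"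
    and f'_cont: "continuous_on {0..} f'"
    and t0: "t0 \<ge> 0"
    and f_pos: "\<forall>t\<ge>t0. f t > 0"
    and gd: "\<forall>t\<ge>t0. ((\<lambda>s. ln (f s)) has_real_derivative gd t) (at t within {t0..})"
    and gdd: "\<forall>t\<ge>t0. (gd has_real_derivative gdd t) (at t within {t0..})"
    and H1: "H1 f gd gdd t0"
    and lam_pos: "\<forall>n. lam n > 0"
    and mu_pos: "\<forall>n. mu n > 0"
    and u_d1: "\<forall>n. \<forall>r\<in>{0..1}. (u n has_real_derivative u' n r) (at r within {0..1})"
    and u_d2: "\<forall>n. \<forall>r\<in>{0..1}. (u' n has_real_derivative u'' n r) (at r within {0..1})"
    and u''_cont: "\<forall>n. continuous_on {0..1} (u'' n)"
    and ode: "\<forall>n. \<forall>r\<in>{0<..<1}. - u'' n r - u' n r / r = lam n * h r * f (u n r)"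
    and u_pos: "\<forall>n. \<forall>r\<in>{0<..<1}. u n r > 0"
    and bc: "\<forall>n. u n 0 = mu n \<and> u' n 0 = 0 \<and> u n 1 = 0"
    and mu_lim: "filterlim mu at_top sequentially"
begin

lemma lam_gt_0: "0 < lam n"
  using lam_pos by simp

lemma f_cont: "continuous_on {0..} f"
  using f_C1 by (intro DERIV_continuous_on[of _ _ f']) auto

lemma h_cont: "continuous_on {0..1} h"
  using h_C1 by (intro DERIV_continuous_on[of _ _ h']) auto

lemma u_cont: "continuous_on {0..1} (u n)"
  using u_d1 by (intro DERIV_continuous_on[of _ _ "u' n"]) auto

lemma u'_cont: "continuous_on {0..1} (u' n)"
  using u_d2 by (intro DERIV_continuous_on[of _ _ "u'' n"]) auto

lemma gd_cont: "continuous_on {t0..} gd"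
  using gdd by (intro DERIV_continuous_on[of _ _ gdd]) auto

lemma ln_f_cont: "continuous_on {t0..} (\<lambda>t. ln (f t))"
  using gd by (intro DERIV_continuous_on[of _ _ gd]) auto

lemma ln_f_has_derivative: "t0 < t \<Longrightarrow> ((\<lambda>s. ln (f s)) has_real_derivative gd t) (at t)"
  using gd by (intro has_real_derivative_at_if_within_atLeast[of _ _ _ t0]) auto

lemma gd_has_derivative: "t0 < t \<Longrightarrow> (gd has_real_derivative gdd t) (at t)"
  using gdd by (intro has_real_derivative_at_if_within_atLeast[of _ _ _ t0]) auto

lemma gd_pos: "t0 \<le> t \<Longrightarrow> 0 < gd t"
  and gdd_pos: "t0 \<le> t \<Longrightarrow> 0 < gdd t"
  using H1 by (auto simp: H1_def)

lemma H1_limit: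
  obtains q where "((\<lambda>t. (gd t)\<^sup>2 / (ln (f t) * gdd t)) \<longlongrightarrow> q) at_top" "1 \<le> q"
  using H1 unfolding H1_def by force

lemma gd_mono: "t0 \<le> x \<Longrightarrow> x \<le> y \<Longrightarrow> gd x \<le> gd y"
proof (rule DERIV_nonneg_imp_increasing_open[of x y])
  fix z assume "t0 \<le> x" "x < z"
  then show "\<exists>d. (gd has_real_derivative d) (at z) \<and> 0 \<le> d"
    using gd_has_derivative[of z] gdd_pos[of z] by (intro exI[of _ "gdd z"]) auto
qed (auto intro: continuous_on_subset[OF gd_cont])

lemma ln_f_mono: "t0 \<le> x \<Longrightarrow> x \<le> y \<Longrightarrow> ln (f x) \<le> ln (f y)"
proof (rule DERIV_nonneg_imp_increasing_open[of x y])
  fix z assume "t0 \<le> x" "x < z"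
  then show "\<exists>d. ((\<lambda>t. ln (f t)) has_real_derivative d) (at z) \<and> 0 \<le> d"
    using ln_f_has_derivative[of z] gd_pos[of z] by (intro exI[of _ "gd z"]) auto
qed (auto intro: continuous_on_subset[OF ln_f_cont])

lemma f_mono: "t0 \<le> x \<Longrightarrow> x \<le> y \<Longrightarrow> f x \<le> f y"
  using ln_f_mono[of x y] f_pos by simp

lemma f'_eq: "t0 < t \<Longrightarrow> f' t = gd t * f t"
proof -
  assume t: "t0 < t"
  have "(f has_real_derivative f' t) (at t)"
    using f_C1 t0 t by (intro has_real_derivative_at_if_within_atLeast[of _ _ _ 0]) auto
  moreover have "0 < f t"
    using f_pos t by simp
  ultimately have "((\<lambda>s. ln (f s)) has_real_derivative f' t / f t) (at t)"
    by (auto intro!: derivative_eq_intros)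
  from DERIV_unique[OF this ln_f_has_derivative[OF t]] show ?thesis
    using \<open>0 < f t\<close> by (simp add: field_simps)
qed

lemma ln_f_ge_tangent: "t0 \<le> t \<Longrightarrow> ln (f t0) + gd t0 * (t - t0) \<le> ln (f t)"
proof -
  assume t: "t0 \<le> t"
  have "ln (f t0) - gd t0 * t0 \<le> ln (f t) - gd t0 * t"
  proof (rule DERIV_nonneg_imp_increasing_open[OF t, where f = "\<lambda>s. ln (f s) - gd t0 * s"])
    fix x assume "t0 < x" "x < t"
    then show "\<exists>y. ((\<lambda>s. ln (f s) - gd t0 * s) has_real_derivative y) (at x) \<and> 0 \<le> y"
      using DERIV_diff[OF ln_f_has_derivative DERIV_cmult_Id, of x "gd t0"] gd_mono[of t0 x]
      by (intro exI[of _ "gd x - gd t0"]) auto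
  qed (auto intro!: continuous_intros continuous_on_subset[OF ln_f_cont])
  then show ?thesis
    by (simp add: algebra_simps)
qed

lemma ln_f_at_top: "filterlim (\<lambda>t. ln (f t)) at_top at_top"
proof (rule filterlim_at_top_mono)
  show "filterlim (\<lambda>t. ln (f t0) + gd t0 * (t - t0)) at_top at_top"
    using gd_pos[of t0] by real_asymp
  show "\<forall>\<^sub>F t in at_top. ln (f t0) + gd t0 * (t - t0) \<le> ln (f t)"
    using ln_f_ge_tangent by (auto simp: eventually_at_top_linorder)
qed

lemma gdd_over_gd_sq_tendsto_0: "((\<lambda>t. gdd t / (gd t)\<^sup>2) \<longlongrightarrow> 0) at_top"
proof -
  obtain q where q: "((\<lambda>t. (gd t)\<^sup>2 / (ln (f t) * gdd t)) \<longlongrightarrow> q) at_top" "1 \<le> q"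
    by (rule H1_limit)
  have "((\<lambda>t. inverse ((gd t)\<^sup>2 / (ln (f t) * gdd t))) \<longlongrightarrow> inverse q) at_top"
    using q by (intro tendsto_inverse) auto
  with tendsto_inverse_0_at_top[OF ln_f_at_top]
  have "((\<lambda>t. inverse (ln (f t)) * inverse ((gd t)\<^sup>2 / (ln (f t) * gdd t))) \<longlongrightarrow> 0 * inverse q) at_top"
    by (rule tendsto_mult)
  moreover have "\<forall>\<^sub>F t in at_top. inverse (ln (f t)) * inverse ((gd t)\<^sup>2 / (ln (f t) * gdd t)) = gdd t / (gd t)\<^sup>2"
    using ln_f_at_top[unfolded filterlim_at_top_dense, rule_format, of 0] eventually_ge_at_top[of t0]
  proof eventually_elim
    case (elim t)
    then show ?case
      using gd_pos[of t] gdd_pos[of t] by (simp add: field_simps)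
  qed
  ultimately have "((\<lambda>t. gdd t / (gd t)\<^sup>2) \<longlongrightarrow> 0 * inverse q) at_top"
    by (rule Lim_transform_eventually)
  then show ?thesis
    by simp
qed

lemma ln_f_linearization:
  assumes \<tau>: "t0 < \<tau>" "\<tau> \<le> v" and v: "v \<le> t"
  shows "0 \<le> ln (f v) - ln (f t) + gd t * (t - v)"
    and "ln (f v) - ln (f t) + gd t * (t - v) \<le> (t - v) * (gd t - gd \<tau>)"
proof -
  have "((\<lambda>s. ln (f s)) has_real_derivative gd x) (at x)" if "v \<le> x" for x
    using ln_f_has_derivative \<tau> that by simp
  then obtain \<xi> where \<xi>: "v \<le> \<xi>" "\<xi> \<le> t" and eq: "ln (f t) - ln (f v) = (t - v) * gd \<xi>"
    using MVT_le[OF v] by blast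
  have "ln (f v) - ln (f t) + gd t * (t - v) = (t - v) * (gd t - gd \<xi>)"
    using eq by (simp add: algebra_simps)
  moreover have "gd \<tau> \<le> gd \<xi>" "gd \<xi> \<le> gd t"
    using gd_mono \<tau> \<xi> by auto
  ultimately show "0 \<le> ln (f v) - ln (f t) + gd t * (t - v)"
    and "ln (f v) - ln (f t) + gd t * (t - v) \<le> (t - v) * (gd t - gd \<tau>)"
    using v by (auto intro: mult_left_mono)
qed

lemma gd_increment_le:
  assumes \<tau>: "t0 < \<tau>" "\<tau> \<le> t" and small: "\<And>\<xi>. \<tau> \<le> \<xi> \<Longrightarrow> gdd \<xi> \<le> \<epsilon> * (gd \<xi>)\<^sup>2"
    and \<epsilon>: "0 \<le> \<epsilon>"
  shows "gd t - gd \<tau> \<le> (t - \<tau>) * (\<epsilon> * (gd t)\<^sup>2)"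
proof -
  have "(gd has_real_derivative gdd x) (at x)" if "\<tau> \<le> x" for x
    using gd_has_derivative \<tau> that by simp
  then obtain \<xi> where \<xi>: "\<tau> \<le> \<xi>" "\<xi> \<le> t" and incr: "gd t - gd \<tau> = (t - \<tau>) * gdd \<xi>"
    using MVT_le[OF \<tau>(2)] by blast
  have "gdd \<xi> \<le> \<epsilon> * (gd \<xi>)\<^sup>2"
    using small \<xi> by simp
  also have "\<dots> \<le> \<epsilon> * (gd t)\<^sup>2"
    using gd_pos[of \<xi>] gd_mono[of \<xi> t] \<xi> \<tau> \<epsilon> by (intro mult_left_mono power_mono) auto
  finally show ?thesis
    unfolding incr using \<tau> by (intro mult_left_mono) auto
qed

lemma gd_shift_ratio_tendsto:
  assumes M: "0 \<le> M"
  shows "((\<lambda>t. gd (t - M / gd t) / gd t) \<longlongrightarrow> 1) at_top"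
proof (rule tendstoI)
  fix e :: real assume e: "0 < e"
  have "\<forall>\<^sub>F t in at_top. gdd t / (gd t)\<^sup>2 < e / (M + 1)"
    using order_tendstoD(2)[OF gdd_over_gd_sq_tendsto_0] e M by simp
  then obtain T where T: "\<forall>t\<ge>T. gdd t / (gd t)\<^sup>2 < e / (M + 1)"
    unfolding eventually_at_top_linorder by blast
  show "\<forall>\<^sub>F t in at_top. dist (gd (t - M / gd t) / gd t) 1 < e"
    using eventually_ge_at_top[of "max T t0 + 1 + M / gd t0"]
  proof eventually_elim
    case (elim t)
    define \<tau> where "\<tau> = t - M / gd t"
    have "0 \<le> M / gd t0"
      using M gd_pos[of t0] by simp
    then have "t0 \<le> t"
      using elim max.cobounded2[of t0 T] by linarith
    then have gt: "gd t0 \<le> gd t" "0 < gd t0"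
      using gd_mono[of t0 t] gd_pos[of t0] by auto
    then have "M / gd t \<le> M / gd t0" "0 \<le> M / gd t"
      using M by (auto intro: divide_left_mono)
    then have \<tau>: "max T t0 < \<tau>" "\<tau> \<le> t"
      using elim unfolding \<tau>_def by linarith+
    have "gdd \<xi> \<le> e / (M + 1) * (gd \<xi>)\<^sup>2" if "\<tau> \<le> \<xi>" for \<xi>
    proof -
      have \<xi>: "T \<le> \<xi>" "t0 \<le> \<xi>"
        using that \<tau>(1) max.cobounded1[of T t0] max.cobounded2[of t0 T] by linarith+
      then have "gdd \<xi> / (gd \<xi>)\<^sup>2 \<le> e / (M + 1)"
        using T by (simp add: less_imp_le)
      then show ?thesis
        using gd_pos[OF \<xi>(2)] M by (simp add: field_simps)
    qed
    with \<tau> have "gd t - gd \<tau> \<le> M / gd t * (e / (M + 1) * (gd t)\<^sup>2)"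
      using gd_increment_le[of \<tau> t "e / (M + 1)"] e M by (simp add: \<tau>_def)
    also have "\<dots> = M / (M + 1) * e * gd t"
      using gt by (simp add: field_simps power2_eq_square)
    also have "\<dots> < e * gd t"
      using M e gt by (simp add: field_simps)
    finally have "1 - gd \<tau> / gd t < e"
      using gt by (simp add: field_simps)
    moreover have "gd \<tau> / gd t \<le> 1"
      using gd_mono[of \<tau> t] \<tau> gt by (simp add: divide_le_eq_1)
    ultimately show ?case
      by (simp add: dist_real_def \<tau>_def)
  qed
qed

lemma u_has_derivative: "0 < r \<Longrightarrow> r < 1 \<Longrightarrow> (u n has_real_derivative u' n r) (at r)"
  using u_d1 by (intro has_real_derivative_at_if_within_Icc[of _ _ _ 0 1]) auto

lemma u'_has_derivative: "0 < r \<Longrightarrow> r < 1 \<Longrightarrow> (u' n has_real_derivative u'' n r) (at r)"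
  using u_d2 by (intro has_real_derivative_at_if_within_Icc[of _ _ _ 0 1]) auto

lemma flux_has_derivative:
  assumes "0 < r" "r < 1"
  shows "((\<lambda>r. r * u' n r) has_real_derivative - (r * (lam n * h r * f (u n r)))) (at r)"
proof -
  have "((\<lambda>r. r * u' n r) has_real_derivative 1 * u' n r + u'' n r * r) (at r)"
    by (rule DERIV_mult[OF DERIV_ident u'_has_derivative[OF assms]])
  moreover have "1 * u' n r + u'' n r * r = - (r * (lam n * h r * f (u n r)))"
    using ode[rule_format, of r n] assms by (simp add: field_simps)
  ultimately show ?thesis
    by simp
qed

lemma u_nonneg: "r \<in> {0..1} \<Longrightarrow> 0 \<le> u n r"
  using u_pos bc mu_pos by (cases "r = 0 \<or> r = 1") (auto intro: less_imp_le)

lemma rhs_nonneg: "r \<in> {0..1} \<Longrightarrow> 0 \<le> lam n * h r * f (u n r)"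
  using lam_pos h_pos f_nonneg u_nonneg by (simp add: less_imp_le)

lemma u'_nonpos:
  assumes r: "r \<in> {0..1}"
  shows "u' n r \<le> 0"
proof (cases "r = 0")
  case False
  have "r * u' n r \<le> 0 * u' n 0"
  proof (rule DERIV_nonpos_imp_decreasing_open[of 0 r "\<lambda>r. r * u' n r"])
    fix x assume "0 < x" "x < r"
    then show "\<exists>y. ((\<lambda>r. r * u' n r) has_real_derivative y) (at x) \<and> y \<le> 0"
      using flux_has_derivative[of x n] rhs_nonneg[of x n] r by (intro exI) auto
  qed (use r False in \<open>auto intro!: continuous_intros continuous_on_subset[OF u'_cont]\<close>)
  then show ?thesis
    using r False by (simp add: mult_le_0_iff)
qed (simp add: bc)

lemma u_le_mu:
  assumes r: "r \<in> {0..1}"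
  shows "u n r \<le> mu n"
proof -
  have "u n r \<le> u n 0"
  proof (rule DERIV_nonpos_imp_decreasing_open[of 0 r])
    fix x assume "0 < x" "x < r"
    then show "\<exists>y. (u n has_real_derivative y) (at x) \<and> y \<le> 0"
      using u_has_derivative[of x n] u'_nonpos[of x n] r by (intro exI) auto
  qed (use r in \<open>auto intro: continuous_on_subset[OF u_cont]\<close>)
  then show ?thesis
    using bc by simp
qed

lemma u_deviation_bound:
  assumes B: "\<And>r. r \<in> {0..1} \<Longrightarrow> lam n * h r * f (u n r) \<le> B" and r: "r \<in> {0..1}"
  shows "\<bar>u' n r\<bar> \<le> B * r / 2" "mu n - u n r \<le> B * r\<^sup>2 / 4"
proof -
  have u'_le: "\<bar>u' n t\<bar> \<le> B * t / 2" if t: "t \<in> {0..1}" for t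
  proof (cases "t = 0")
    case False
    show ?thesis
    proof (rule radial_flux_bound[where D = "\<lambda>r. lam n * h r * f (u n r)"])
      show "continuous_on {0..t} (u' n)"
        using t by (auto intro: continuous_on_subset[OF u'_cont])
    next
      fix x assume "0 < x" "x < t"
      then show "((\<lambda>r. r * u' n r) has_real_derivative - (x * (lam n * h x * f (u n x)))) (at x)"
        "\<bar>lam n * h x * f (u n x)\<bar> \<le> B"
        using flux_has_derivative[of x n] rhs_nonneg[of x n] B[of x] t by auto
    qed (use t False in auto)
  qed (simp add: bc)
  then show "\<bar>u' n r\<bar> \<le> B * r / 2"
    using r .
  have "\<bar>u n r - u n 0\<bar> \<le> B * r\<^sup>2 / 4 - B * 0\<^sup>2 / 4"
  proof (rule abs_diff_le_if_deriv_dominated[where \<phi>' = "u' n" and \<Phi>' = "\<lambda>t. B * t / 2"])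
    fix t assume "0 < t" "t < r"
    then show "(u n has_real_derivative u' n t) (at t)" "\<bar>u' n t\<bar> \<le> B * t / 2"
      using u_has_derivative u'_le r by auto
    show "((\<lambda>t. B * t\<^sup>2 / 4) has_real_derivative B * t / 2) (at t)"
      by (auto intro!: derivative_eq_intros)
  qed (use r in \<open>auto intro!: continuous_intros continuous_on_subset[OF u_cont]\<close>)
  then have "u n 0 - u n r \<le> B * r\<^sup>2 / 4"
    unfolding abs_le_iff by simp
  then show "mu n - u n r \<le> B * r\<^sup>2 / 4"
    using bc by simp
qed

lemma flux_integrand_cont: "continuous_on {0..1} (\<lambda>r. lam n * h r * f (u n r) * r)"
proof -
  have "continuous_on {0..1} (\<lambda>r. f (u n r))"
    by (rule continuous_on_compose2[OF f_cont u_cont]) (use u_nonneg in auto)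
  then show ?thesis
    by (intro continuous_intros h_cont)
qed

lemma flux'_integrand_cont: "continuous_on {0..1} (\<lambda>r. lam n * h r * f' (u n r) * r)"
proof -
  have "continuous_on {0..1} (\<lambda>r. f' (u n r))"
    by (rule continuous_on_compose2[OF f'_cont u_cont]) (use u_nonneg in auto)
  then show ?thesis
    by (intro continuous_intros h_cont)
qed

lemma flux_integral:
  assumes "0 < \<rho>" "\<rho> \<le> 1"
  shows "((\<lambda>r. lam n * h r * f (u n r) * r) has_integral - (\<rho> * u' n \<rho>)) {0..\<rho>}"
proof -
  have "((\<lambda>r. - (r * (lam n * h r * f (u n r)))) has_integral \<rho> * u' n \<rho> - 0 * u' n 0) {0..\<rho>}"
  proof (rule fundamental_theorem_of_calculus_interior)
    show "continuous_on {0..\<rho>} (\<lambda>r. r * u' n r)"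
      using assms by (auto intro!: continuous_intros continuous_on_subset[OF u'_cont])
  next
    fix x assume "x \<in> {0<..<\<rho>}"
    then show "((\<lambda>r. r * u' n r) has_vector_derivative - (x * (lam n * h x * f (u n x)))) (at x)"
      using flux_has_derivative[of x n] assms
      by (simp add: has_real_derivative_iff_has_vector_derivative)
  qed (use assms in auto)
  from has_integral_neg[OF this] show ?thesis
    by (simp add: mult.commute)
qed

definition Hmax :: real where
  "Hmax = Sup (h ` {0..1})"

lemma h_le_Hmax: "r \<in> {0..1} \<Longrightarrow> h r \<le> Hmax"
  unfolding Hmax_def
  by (intro cSUP_upper bounded_imp_bdd_above compact_imp_bounded compact_continuous_image h_cont) auto

lemma h0_pos: "0 < h 0"
  using h_pos by simp

lemma Hmax_pos: "0 < Hmax"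
  using h_le_Hmax[of 0] h0_pos by simp

definition large :: "nat \<Rightarrow> bool" where
  "large n \<longleftrightarrow> t0 < mu n \<and> (\<forall>r\<in>{0..1}. f (u n r) \<le> f (mu n))"

lemma eventually_large: "eventually large sequentially"
proof -
  define K where "K = Sup (f ` {0..t0})"
  have f_le_K: "f t \<le> K" if "t \<in> {0..t0}" for t
    unfolding K_def using that
    by (intro cSUP_upper bounded_imp_bdd_above compact_imp_bounded compact_continuous_image
        continuous_on_subset[OF f_cont]) auto
  have "\<forall>\<^sub>F t in at_top. t0 < t \<and> K \<le> f t"
    using ln_f_at_top[unfolded filterlim_at_top, rule_format, of "ln (max K 1)"] eventually_gt_at_top[of t0]
  proof eventually_elim
    case (elim t)
    then have "max K 1 \<le> f t"
      using f_pos by (subst (asm) ln_le_cancel_iff) auto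
    with elim show ?case
      by simp
  qed
  from eventually_compose_filterlim[OF this mu_lim]
  show ?thesis
  proof eventually_elim
    case (elim n)
    have "f (u n r) \<le> f (mu n)" if r: "r \<in> {0..1}" for r
    proof (cases "u n r \<le> t0")
      case True
      then show ?thesis
        using f_le_K[of "u n r"] u_nonneg[OF r] elim by simp
    qed (use f_mono u_le_mu[OF r] in auto)
    with elim show ?case
      by (simp add: large_def)
  qed
qed

lemma large_rhs_le:
  assumes "large n" "r \<in> {0..1}"
  shows "lam n * h r * f (u n r) \<le> lam n * Hmax * f (mu n)"
proof -
  have "h r * f (u n r) \<le> Hmax * f (mu n)"
    using assms h_le_Hmax[of r] Hmax_pos f_nonneg u_nonneg[of r n]
    by (intro mult_mono) (auto simp: large_def)
  then show ?thesis
    using lam_gt_0[of n] by (simp add: mult.assoc)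
qed

definition gamma0 :: "nat \<Rightarrow> real" where
  "gamma0 n = sqrt (1 / (lam n * h 0 * f' (mu n)))"

lemma large_pos: "large n \<Longrightarrow> 0 < gd (mu n) \<and> 0 < f (mu n)"
  using gd_pos f_pos by (simp add: large_def less_imp_le)

lemma large_f'_mu: "large n \<Longrightarrow> f' (mu n) = gd (mu n) * f (mu n)"
  using f'_eq by (simp add: large_def)

lemma large_gamma0_denom_pos: "large n \<Longrightarrow> 0 < lam n * h 0 * f' (mu n)"
  using lam_gt_0[of n] h0_pos large_pos[of n] large_f'_mu[of n] by simp

lemma gamma0_sq: "large n \<Longrightarrow> (gamma0 n)\<^sup>2 = 1 / (lam n * h 0 * gd (mu n) * f (mu n))"
  using large_gamma0_denom_pos[of n] large_f'_mu[of n] by (simp add: gamma0_def mult.assoc)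

lemma gamma0_pos: "large n \<Longrightarrow> 0 < gamma0 n"
  using large_gamma0_denom_pos[of n] by (simp add: gamma0_def)

lemma gamma0_normalization: "large n \<Longrightarrow> gd (mu n) * (gamma0 n)\<^sup>2 * lam n * f (mu n) = 1 / h 0"
  using gamma0_sq[of n] lam_gt_0[of n] h0_pos large_pos[of n] by (simp add: field_simps)

lemma gamma0_sq_le:
  assumes n: "large n"
  shows "(gamma0 n)\<^sup>2 \<le> Hmax / (4 * h 0 * gd t0 * mu n)"
proof -
  have "mu n - u n 1 \<le> lam n * Hmax * f (mu n) * 1\<^sup>2 / 4"
    using large_rhs_le[OF n] by (intro u_deviation_bound(2)) auto
  then have four: "4 * mu n \<le> lam n * Hmax * f (mu n)"
    using bc by simp
  have "0 < lam n * Hmax * f (mu n)"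
    using lam_gt_0[of n] Hmax_pos large_pos[OF n] by simp
  then have "4 * mu n * gd t0 \<le> lam n * Hmax * f (mu n) * gd (mu n)"
    using gd_mono[of t0 "mu n"] gd_pos[of t0] n by (intro mult_mono[OF four]) (auto simp: large_def)
  then show ?thesis
    unfolding gamma0_sq[OF n] using lam_gt_0[of n] h0_pos Hmax_pos gd_pos[of t0] mu_pos large_pos[OF n]
    by (simp add: field_simps)
qed

lemma gamma0_tendsto_0: "gamma0 \<longlonglongrightarrow> 0"
proof (rule tendsto_sandwich[of "\<lambda>n. 0" _ _ "\<lambda>n. sqrt (Hmax / (4 * h 0 * gd t0) * inverse (mu n))"])
  show "\<forall>\<^sub>F n in sequentially. 0 \<le> gamma0 n"
    using eventually_large by eventually_elim (simp add: gamma0_pos less_imp_le)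
  show "\<forall>\<^sub>F n in sequentially. gamma0 n \<le> sqrt (Hmax / (4 * h 0 * gd t0) * inverse (mu n))"
    using eventually_large
  proof eventually_elim
    case (elim n)
    then show ?case
      using gamma0_sq_le[OF elim] gamma0_pos[OF elim] by (intro real_le_rsqrt) (simp add: field_simps)
  qed
  have "(\<lambda>n. Hmax / (4 * h 0 * gd t0) * inverse (mu n)) \<longlonglongrightarrow> 0"
    by (rule tendsto_mult_right_zero[OF tendsto_inverse_0_at_top[OF mu_lim]])
  from tendsto_real_sqrt[OF this]
  show "(\<lambda>n. sqrt (Hmax / (4 * h 0 * gd t0) * inverse (mu n))) \<longlonglongrightarrow> 0"
    by (simp only: real_sqrt_zero)
qed simp

subsection \<open>The rescaled profiles\<close>

definition Z :: "nat \<Rightarrow> real \<Rightarrow> real" where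
  "Z n s = gd (mu n) * (u n (gamma0 n * s) - mu n)"

definition Z' :: "nat \<Rightarrow> real \<Rightarrow> real" where
  "Z' n s = gd (mu n) * gamma0 n * u' n (gamma0 n * s)"

definition Z'' :: "nat \<Rightarrow> real \<Rightarrow> real" where
  "Z'' n s = gd (mu n) * (gamma0 n)\<^sup>2 * u'' n (gamma0 n * s)"

definition Zrhs :: "nat \<Rightarrow> real \<Rightarrow> real" where
  "Zrhs n s = gd (mu n) * (gamma0 n)\<^sup>2 * lam n * h (gamma0 n * s) * f (u n (gamma0 n * s))"

definition Zbound :: "real \<Rightarrow> real" where
  "Zbound R = Hmax * R\<^sup>2 / (4 * h 0)"

lemma Zbound_mono: "0 \<le> s \<Longrightarrow> s \<le> R \<Longrightarrow> Zbound s \<le> Zbound R"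
  unfolding Zbound_def using Hmax_pos h0_pos by (intro divide_right_mono mult_left_mono power_mono) auto

lemma Zbound_nonneg: "0 \<le> Zbound R"
  unfolding Zbound_def using Hmax_pos h0_pos by simp

lemma Z_initial: "Z n 0 = 0" "Z' n 0 = 0"
  using bc by (simp_all add: Z_def Z'_def)

lemma Z_has_derivative:
  assumes "0 < gamma0 n" "gamma0 n * R \<le> 1" "s \<in> {0..R}"
  shows "(Z n has_real_derivative Z' n s) (at s within {0..R})"
    and "(Z' n has_real_derivative Z'' n s) (at s within {0..R})"
proof -
  have "((\<lambda>s. u n (gamma0 n * s)) has_real_derivative u' n (gamma0 n * s) * gamma0 n) (at s within {0..R})"
    using assms u_d1 by (intro has_real_derivative_scaled_within) auto
  from DERIV_cmult[OF DERIV_diff[OF this DERIV_const[of "mu n"]], of "gd (mu n)"]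
  show "(Z n has_real_derivative Z' n s) (at s within {0..R})"
    unfolding Z_def[abs_def] Z'_def by (simp add: algebra_simps)
  have "((\<lambda>s. u' n (gamma0 n * s)) has_real_derivative u'' n (gamma0 n * s) * gamma0 n) (at s within {0..R})"
    using assms u_d2 by (intro has_real_derivative_scaled_within) auto
  from DERIV_cmult[OF this, of "gd (mu n) * gamma0 n"]
  show "(Z' n has_real_derivative Z'' n s) (at s within {0..R})"
    unfolding Z'_def[abs_def] Z''_def by (simp add: algebra_simps power2_eq_square)
qed

lemma Z''_cont:
  assumes "0 < gamma0 n" "gamma0 n * R \<le> 1"
  shows "continuous_on {0..R} (Z'' n)"
proof -
  have "continuous_on {0..R} (\<lambda>s. u'' n (gamma0 n * s))"
    by (rule continuous_on_compose2[OF u''_cont[rule_format, of n] _ scaled_interval_subset[OF assms]])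
      (intro continuous_intros)
  then show ?thesis
    unfolding Z''_def[abs_def] by (intro continuous_intros)
qed

lemma Z_ode:
  assumes "0 < gamma0 n" "gamma0 n * R < 1" "0 < s" "s \<le> R"
  shows "Z'' n s = - Zrhs n s - Z' n s / s"
proof -
  have "gamma0 n * s \<le> gamma0 n * R"
    using assms by (intro mult_left_mono) auto
  then have "gamma0 n * s < 1"
    using assms(2) by linarith
  then have "gamma0 n * s \<in> {0<..<1}"
    using assms by simp
  then have u'': "u'' n (gamma0 n * s) = - (lam n * h (gamma0 n * s) * f (u n (gamma0 n * s)))
      - u' n (gamma0 n * s) / (gamma0 n * s)"
    using ode[rule_format, of "gamma0 n * s" n] by (simp add: algebra_simps)
  show ?thesis
    unfolding Z''_def Zrhs_def Z'_def u'' using assms by (simp add: field_simps power2_eq_square)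
qed

lemma Z_bounds:
  assumes n: "large n" and s: "0 \<le> s" "gamma0 n * s \<le> 1"
  shows "- Zbound s \<le> Z n s" and "Z n s \<le> 0"
proof -
  have r: "gamma0 n * s \<in> {0..1}"
    using s gamma0_pos[OF n] by simp
  have "mu n - u n (gamma0 n * s) \<le> lam n * Hmax * f (mu n) * (gamma0 n * s)\<^sup>2 / 4"
    using large_rhs_le[OF n] r by (intro u_deviation_bound(2)) auto
  then have "gd (mu n) * (mu n - u n (gamma0 n * s))
      \<le> gd (mu n) * (lam n * Hmax * f (mu n) * (gamma0 n * s)\<^sup>2 / 4)"
    using large_pos[OF n] by (intro mult_left_mono) auto
  also have "\<dots> = (gd (mu n) * (gamma0 n)\<^sup>2 * lam n * f (mu n)) * Hmax * s\<^sup>2 / 4"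
    by (simp add: algebra_simps power_mult_distrib)
  also have "\<dots> = Zbound s"
    by (simp add: gamma0_normalization[OF n] Zbound_def)
  finally show "- Zbound s \<le> Z n s"
    by (simp add: Z_def algebra_simps)
  show "Z n s \<le> 0"
    using u_le_mu[OF r] large_pos[OF n] by (simp add: Z_def mult_nonneg_nonpos)
qed

lemma Zrhs_eq: "large n \<Longrightarrow> Zrhs n s = h (gamma0 n * s) / h 0 * (f (u n (gamma0 n * s)) / f (mu n))"
  using gamma0_normalization[of n] h0_pos large_pos[of n] by (simp add: Zrhs_def field_simps)

text \<open>\<open>f (u n (gamma0 n * s)) / f (mu n) \<approx> exp (Z n s)\<close> because \<open>ln \<circ> f\<close> is nearly linear,
  with slope \<open>gd (mu n)\<close>, on the interval \<open>[mu n - M / gd (mu n), mu n]\<close> where \<open>u n\<close> lives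
  as long as \<open>- M \<le> Z n\<close>.\<close>
lemma Zrhs_exp_Z_bound:
  assumes n: "large n" and s: "0 \<le> s" "gamma0 n * s \<le> 1" and M: "- M \<le> Z n s"
    and \<tau>: "t0 < mu n - M / gd (mu n)"
  shows "\<bar>Zrhs n s - exp (Z n s)\<bar>
    \<le> \<bar>h (gamma0 n * s) / h 0 - 1\<bar> + M * (1 - gd (mu n - M / gd (mu n)) / gd (mu n))"
proof -
  define c where "c = gd (mu n)"
  define v where "v = u n (gamma0 n * s)"
  define E where "E = f v / f (mu n)"
  have c: "0 < c" "0 < f (mu n)"
    using large_pos[OF n] by (simp_all add: c_def)
  have r: "gamma0 n * s \<in> {0..1}"
    using s gamma0_pos[OF n] by simp
  have Zv: "Z n s = - c * (mu n - v)"
    by (simp add: Z_def c_def v_def algebra_simps)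
  have v: "mu n - M / c \<le> v" "v \<le> mu n"
    using M Zv c u_le_mu[OF r] by (auto simp: v_def field_simps)
  have fv: "0 < f v"
    using f_pos \<tau> v by (simp add: c_def)
  have E: "0 < E" "E \<le> 1" "E = exp (ln (f v) - ln (f (mu n)))"
    using fv c f_mono[of v "mu n"] \<tau> v by (auto simp: E_def c_def exp_diff)
  have "\<bar>(ln (f v) - ln (f (mu n))) - Z n s\<bar> \<le> (mu n - v) * (c - gd (mu n - M / c))"
    using ln_f_linearization[of "mu n - M / c" v "mu n"] \<tau> v by (simp add: Zv c_def algebra_simps)
  also have "\<dots> \<le> (M / c) * (c - gd (mu n - M / c))"
    using v gd_mono[of "mu n - M / c" "mu n"] \<tau> by (intro mult_right_mono) (auto simp: c_def)
  also have "\<dots> = M * (1 - gd (mu n - M / c) / c)"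
    using c by (simp add: field_simps)
  finally have log_close: "\<bar>(ln (f v) - ln (f (mu n))) - Z n s\<bar> \<le> M * (1 - gd (mu n - M / c) / c)" .
  have exp_close: "\<bar>E - exp (Z n s)\<bar> \<le> \<bar>(ln (f v) - ln (f (mu n))) - Z n s\<bar>"
    unfolding E(3) using Z_bounds(2)[OF n s] ln_f_mono[of v "mu n"] \<tau> v
    by (intro abs_exp_diff_le_nonpos) (auto simp: c_def)
  define H where "H = h (gamma0 n * s) / h 0"
  have "Zrhs n s = H * E"
    by (simp add: Zrhs_eq[OF n] E_def v_def H_def)
  then have "\<bar>Zrhs n s - exp (Z n s)\<bar> = \<bar>(H - 1) * E + (E - exp (Z n s))\<bar>"
    by (simp add: algebra_simps)
  also have "\<dots> \<le> \<bar>H - 1\<bar> * E + \<bar>E - exp (Z n s)\<bar>"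
    using abs_triangle_ineq[of "(H - 1) * E" "E - exp (Z n s)"] E(1) by (simp add: abs_mult)
  also have "\<dots> \<le> \<bar>H - 1\<bar> * 1 + M * (1 - gd (mu n - M / c) / c)"
    using E(2) exp_close log_close by (intro add_mono mult_left_mono) auto
  finally show ?thesis
    by (simp add: H_def c_def)
qed

lemma eventually_shift_above_t0: "\<forall>\<^sub>F n in sequentially. t0 < mu n - M / gd (mu n)"
proof -
  have "\<forall>\<^sub>F n in sequentially. t0 + \<bar>M\<bar> / gd t0 + 1 \<le> mu n"
    using mu_lim by (simp add: filterlim_at_top)
  then show ?thesis
  proof eventually_elim
    case (elim n)
    have "0 \<le> \<bar>M\<bar> / gd t0"
      using gd_pos[of t0] by simp
    then have "t0 \<le> mu n"
      using elim by linarith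
    then have "M / gd (mu n) \<le> \<bar>M\<bar> / gd (mu n)" "\<bar>M\<bar> / gd (mu n) \<le> \<bar>M\<bar> / gd t0"
      using gd_mono[of t0 "mu n"] gd_pos[of t0] by (auto intro: divide_right_mono divide_left_mono)
    with elim show ?case
      by linarith
  qed
qed

lemma h_ratio_close:
  assumes "0 < \<eta>"
  obtains \<delta> where "0 < \<delta>" "\<And>r. r \<in> {0..1} \<Longrightarrow> r < \<delta> \<Longrightarrow> \<bar>h r / h 0 - 1\<bar> \<le> \<eta>"
proof -
  obtain \<delta> where "0 < \<delta>" "\<forall>r\<in>{0..1}. dist r 0 < \<delta> \<longrightarrow> dist (h r) (h 0) < \<eta> * h 0"
    using h_cont assms h0_pos unfolding continuous_on_iff by (metis atLeastAtMost_iff mult_pos_pos order.refl zero_le_one)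
  then show ?thesis
    using h0_pos by (intro that[of \<delta>]) (auto simp: dist_real_def abs_divide diff_divide_distrib[symmetric] field_simps)
qed

lemma Zrhs_close_exp_Z:
  assumes R: "0 < R" and \<eta>: "0 < \<eta>"
  shows "\<forall>\<^sub>F n in sequentially. \<forall>s\<in>{0..R}. \<bar>Zrhs n s - exp (Z n s)\<bar> \<le> \<eta>"
proof -
  define M where "M = Zbound R"
  obtain \<delta> where \<delta>: "0 < \<delta>" and h_close: "\<And>r. r \<in> {0..1} \<Longrightarrow> r < \<delta> \<Longrightarrow> \<bar>h r / h 0 - 1\<bar> \<le> \<eta> / 2"
    using h_ratio_close[of "\<eta> / 2"] \<eta> by auto
  have "((\<lambda>n. M * (1 - gd (mu n - M / gd (mu n)) / gd (mu n))) \<longlongrightarrow> M * (1 - 1)) sequentially"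
    using filterlim_compose[OF gd_shift_ratio_tendsto mu_lim] Zbound_nonneg
    by (intro tendsto_intros) (auto simp: M_def)
  from order_tendstoD(2)[OF this, of "\<eta> / 2"]
  have ratio: "\<forall>\<^sub>F n in sequentially. M * (1 - gd (mu n - M / gd (mu n)) / gd (mu n)) < \<eta> / 2"
    using \<eta> by simp
  have small: "\<forall>\<^sub>F n in sequentially. gamma0 n * R < min \<delta> 1"
    using order_tendstoD(2)[OF tendsto_mult_right_zero[OF gamma0_tendsto_0], of "min \<delta> 1" R] \<delta>
    by (simp add: mult.commute)
  show ?thesis
    using eventually_large eventually_shift_above_t0[of M] ratio small
  proof eventually_elim
    case (elim n)
    show ?case
    proof
      fix s assume s: "s \<in> {0..R}"
      have \<gamma>s: "gamma0 n * s \<le> gamma0 n * R"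
        using s gamma0_pos[OF elim(1)] by (intro mult_left_mono) auto
      then have \<gamma>s': "gamma0 n * s \<le> 1" "gamma0 n * s < \<delta>"
        using elim(4) by linarith+
      have "- M \<le> Z n s"
        using Z_bounds(1)[OF elim(1), of s] Zbound_mono[of s R] \<gamma>s' s by (auto simp: M_def)
      then have "\<bar>Zrhs n s - exp (Z n s)\<bar>
          \<le> \<bar>h (gamma0 n * s) / h 0 - 1\<bar> + M * (1 - gd (mu n - M / gd (mu n)) / gd (mu n))"
        using \<gamma>s' elim s by (intro Zrhs_exp_Z_bound) auto
      also have "\<dots> \<le> \<eta> / 2 + \<eta> / 2"
        using h_close[of "gamma0 n * s"] \<gamma>s' elim s gamma0_pos[OF elim(1)] by (intro add_mono) auto
      finally show "\<bar>Zrhs n s - exp (Z n s)\<bar> \<le> \<eta>"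
        by simp
    qed
  qed
qed

lemma Z_bubble_has_derivative:
  assumes "0 < gamma0 n" "gamma0 n * R \<le> 1" "s \<in> {0..R}"
  shows "((\<lambda>s. Z n s - bubble s) has_real_derivative Z' n s - bubble' s) (at s within {0..R})"
    and "((\<lambda>s. Z' n s - bubble' s) has_real_derivative Z'' n s - bubble'' s) (at s within {0..R})"
  using DERIV_diff[OF Z_has_derivative(1)[OF assms] has_field_derivative_at_within[OF has_real_derivative_bubble]]
    DERIV_diff[OF Z_has_derivative(2)[OF assms] has_field_derivative_at_within[OF has_real_derivative_bubble']]
  by auto

lemma eventually_gamma0_small: "0 < c \<Longrightarrow> \<forall>\<^sub>F n in sequentially. gamma0 n * R < c"
  using order_tendstoD(2)[OF tendsto_mult_right_zero[OF gamma0_tendsto_0, of R]]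
  by (simp add: mult.commute)

text \<open>\<open>Z n - bubble\<close> solves the linearised radial equation with a forcing term that is
  small up to \<open>\<bar>Z n - bubble\<bar>\<close> itself, so the stability estimate of \<open>radial_ode\<close> applies.\<close>
lemma Z_close_bubble:
  assumes R: "0 < R" and e: "0 < e"
  shows "\<forall>\<^sub>F n in sequentially. large n \<and> gamma0 n * R < 1 \<and>
    (\<forall>s\<in>{0..R}. \<bar>Z n s - bubble s\<bar> \<le> e \<and> \<bar>Z' n s - bubble' s\<bar> \<le> e \<and> \<bar>Z'' n s - bubble'' s\<bar> \<le> e)"
proof -
  define K where "K = (1 + 2 * exp (R\<^sup>2)) * (R + 2)"
  have K: "0 < K"
    using R by (simp add: K_def add_pos_pos)
  show ?thesis
    using eventually_large eventually_gamma0_small[OF zero_less_one, of R] Zrhs_close_exp_Z[OF R divide_pos_pos[OF e K]]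
  proof eventually_elim
    case (elim n)
    have \<gamma>: "0 < gamma0 n" "gamma0 n * R \<le> 1"
      using gamma0_pos elim by auto
    interpret W: radial_ode R "\<lambda>s. Z n s - bubble s" "\<lambda>s. Z' n s - bubble' s" "\<lambda>s. Z'' n s - bubble'' s"
      "\<lambda>s. Zrhs n s - exp (bubble s)"
    proof
      show "continuous_on {0..R} (\<lambda>s. Z'' n s - bubble'' s)"
        using Z''_cont[OF \<gamma>] continuous_on_bubble'' by (intro continuous_intros)
    next
      fix s assume "0 < s" "s \<le> R"
      then show "Z'' n s - bubble'' s = - (Zrhs n s - exp (bubble s)) - (Z' n s - bubble' s) / s"
        using Z_ode[of n R s] bubble_ode[of s] \<gamma> elim by (simp add: diff_divide_distrib)
    qed (use R Z_bubble_has_derivative[OF \<gamma>] Z_initial bubble_initial in auto)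
    have "\<bar>Zrhs n s - exp (bubble s)\<bar> \<le> e / K + \<bar>Z n s - bubble s\<bar>" if s: "s \<in> {0..R}" for s
    proof -
      have "gamma0 n * s \<le> gamma0 n * R"
        using s \<gamma> by (intro mult_left_mono) auto
      then have "gamma0 n * s \<le> 1"
        using \<gamma> by linarith
      then have "\<bar>exp (Z n s) - exp (bubble s)\<bar> \<le> \<bar>Z n s - bubble s\<bar>"
        using Z_bounds(2)[OF elim(1), of s] s \<gamma> by (intro abs_exp_diff_le_nonpos bubble_nonpos) auto
      then show ?thesis
        using elim(3) s by (smt (verit, best))
    qed
    then have "\<bar>Z n s - bubble s\<bar> \<le> K * (e / K) \<and> \<bar>Z' n s - bubble' s\<bar> \<le> K * (e / K)
        \<and> \<bar>Z'' n s - bubble'' s\<bar> \<le> K * (e / K)" if "s \<in> {0..R}" for s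
      using W.stability[of "e / K"] that e K unfolding K_def by auto
    then show ?case
      using elim K by simp
  qed
qed

lemma C2_norm_Z_bubble_tendsto_0:
  assumes R: "0 < R"
  shows "(\<lambda>n. C2_norm {0..R} (\<lambda>r. Z n r - bubble r)) \<longlonglongrightarrow> 0"
proof (rule tendsto_0_if_eventually_abs_le)
  fix e :: real assume e: "0 < e"
  have "0 < e / 3"
    using e by simp
  from Z_close_bubble[OF R this]
  show "\<forall>\<^sub>F n in sequentially. \<bar>C2_norm {0..R} (\<lambda>r. Z n r - bubble r)\<bar> \<le> e"
  proof eventually_elim
    case (elim n)
    then have \<gamma>: "0 < gamma0 n" "gamma0 n * R \<le> 1"
      using gamma0_pos by auto
    have "\<bar>C2_norm {0..R} (\<lambda>r. Z n r - bubble r)\<bar> \<le> 3 * (e / 3)"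
      using elim Z_bubble_has_derivative[OF \<gamma>] by (intro C2_norm_le[OF R]) auto
    then show ?case
      by simp
  qed
qed

lemma Z'_tendsto:
  assumes R: "0 < R"
  shows "(\<lambda>n. Z' n R) \<longlonglongrightarrow> bubble' R"
proof (rule LIM_zero_cancel, rule tendsto_0_if_eventually_abs_le)
  fix e :: real assume "0 < e"
  from Z_close_bubble[OF R this] show "\<forall>\<^sub>F n in sequentially. \<bar>Z' n R - bubble' R\<bar> \<le> e"
    by eventually_elim (use R in auto)
qed

lemma flux_eq_Z':
  assumes n: "large n" and R: "0 < R" "gamma0 n * R \<le> 1"
  shows "gd (mu n) * integral {0..gamma0 n * R} (\<lambda>r. lam n * h r * f (u n r) * r) = - R * Z' n R"
  using flux_integral[of "gamma0 n * R" n] gamma0_pos[OF n] R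
  by (simp add: integral_unique Z'_def algebra_simps)

lemma flux_tendsto:
  assumes R: "0 < R"
  shows "(\<lambda>n. gd (mu n) * integral {0..gamma0 n * R} (\<lambda>r. lam n * h r * f (u n r) * r))
    \<longlonglongrightarrow> 4 * R\<^sup>2 / (8 + R\<^sup>2)"
proof (rule Lim_transform_eventually)
  have "- R * bubble' R = 4 * R\<^sup>2 / (8 + R\<^sup>2)"
    by (simp add: bubble'_def power2_eq_square)
  with tendsto_mult[OF tendsto_const Z'_tendsto[OF R], of "- R"]
  show "(\<lambda>n. - R * Z' n R) \<longlonglongrightarrow> 4 * R\<^sup>2 / (8 + R\<^sup>2)"
    by simp
  show "\<forall>\<^sub>F n in sequentially. - R * Z' n R
      = gd (mu n) * integral {0..gamma0 n * R} (\<lambda>r. lam n * h r * f (u n r) * r)"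
    using eventually_large eventually_gamma0_small[OF zero_less_one, of R]
    by eventually_elim (use flux_eq_Z' R in auto)
qed

lemma u_above_shift:
  assumes n: "large n" and R: "gamma0 n * R \<le> 1" and r: "0 \<le> r" "r \<le> gamma0 n * R"
  shows "mu n - Zbound R / gd (mu n) \<le> u n r"
proof -
  define s where "s = r / gamma0 n"
  have s: "0 \<le> s" "s \<le> R" "gamma0 n * s = r"
    using gamma0_pos[OF n] r by (auto simp: s_def field_simps)
  have "gamma0 n * s \<le> 1"
    using s r R by simp
  then have "- Zbound R \<le> Z n s"
    using Z_bounds(1)[OF n s(1)] Zbound_mono[OF s(1,2)] by simp
  then show ?thesis
    using large_pos[OF n] s(3) by (simp add: Z_def field_simps)
qed

lemma flux'_integral_bounds:
  assumes n: "large n" and R: "gamma0 n * R \<le> 1" and \<tau>: "t0 < mu n - Zbound R / gd (mu n)"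
  defines "I \<equiv> integral {0..gamma0 n * R} (\<lambda>r. lam n * h r * f (u n r) * r)"
    and "I' \<equiv> integral {0..gamma0 n * R} (\<lambda>r. lam n * h r * f' (u n r) * r)"
  shows "gd (mu n - Zbound R / gd (mu n)) * I \<le> I'" and "I' \<le> gd (mu n) * I"
proof -
  define \<tau> where "\<tau> = mu n - Zbound R / gd (mu n)"
  have sub: "{0..gamma0 n * R} \<subseteq> {0..1}"
    using R by auto
  have int: "(\<lambda>r. lam n * h r * f (u n r) * r) integrable_on {0..gamma0 n * R}"
    "(\<lambda>r. lam n * h r * f' (u n r) * r) integrable_on {0..gamma0 n * R}"
    by (intro integrable_continuous_interval continuous_on_subset[OF _ sub]
        flux_integrand_cont flux'_integrand_cont)+
  have pointwise: "gd \<tau> * (lam n * h r * f (u n r) * r) \<le> lam n * h r * f' (u n r) * r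
    \<and> lam n * h r * f' (u n r) * r \<le> gd (mu n) * (lam n * h r * f (u n r) * r)"
    if r: "r \<in> {0..gamma0 n * R}" for r
  proof -
    have u: "\<tau> \<le> u n r" "u n r \<le> mu n"
      using u_above_shift[OF n R, of r] u_le_mu[of r n] r sub by (auto simp: \<tau>_def)
    have A: "0 \<le> lam n * h r * f (u n r) * r"
      using rhs_nonneg[of r n] r sub by auto
    have "f' (u n r) = gd (u n r) * f (u n r)"
      using f'_eq u \<tau> by (simp add: \<tau>_def)
    then have eq: "lam n * h r * f' (u n r) * r = gd (u n r) * (lam n * h r * f (u n r) * r)"
      by simp
    have "gd \<tau> \<le> gd (u n r)" "gd (u n r) \<le> gd (mu n)"
      using gd_mono u \<tau> by (auto simp: \<tau>_def)
    then show ?thesis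
      unfolding eq using mult_right_mono[OF _ A] by blast
  qed
  show "gd (mu n - Zbound R / gd (mu n)) * I \<le> I'"
    using integral_le[OF integrable_on_cmult_left[OF int(1)] int(2)] pointwise
    by (simp add: I_def I'_def \<tau>_def)
  show "I' \<le> gd (mu n) * I"
    using integral_le[OF int(2) integrable_on_cmult_left[OF int(1)]] pointwise
    by (simp add: I_def I'_def)
qed

lemma flux'_tendsto:
  assumes R: "0 < R"
  shows "(\<lambda>n. integral {0..gamma0 n * R} (\<lambda>r. lam n * h r * f' (u n r) * r)) \<longlonglongrightarrow> 4 * R\<^sup>2 / (8 + R\<^sup>2)"
proof -
  define I where "I n = integral {0..gamma0 n * R} (\<lambda>r. lam n * h r * f (u n r) * r)" for n
  define q where "q n = gd (mu n - Zbound R / gd (mu n)) / gd (mu n)" for n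
  have "q \<longlonglongrightarrow> 1"
    unfolding q_def using filterlim_compose[OF gd_shift_ratio_tendsto mu_lim] Zbound_nonneg .
  from tendsto_mult[OF this flux_tendsto[OF R, folded I_def]]
  have lower: "(\<lambda>n. q n * (gd (mu n) * I n)) \<longlonglongrightarrow> 4 * R\<^sup>2 / (8 + R\<^sup>2)"
    by simp
  have "\<forall>\<^sub>F n in sequentially. q n * (gd (mu n) * I n)
      \<le> integral {0..gamma0 n * R} (\<lambda>r. lam n * h r * f' (u n r) * r)
    \<and> integral {0..gamma0 n * R} (\<lambda>r. lam n * h r * f' (u n r) * r) \<le> gd (mu n) * I n"
    using eventually_large eventually_gamma0_small[OF zero_less_one, of R]
      eventually_shift_above_t0[of "Zbound R"]
  proof eventually_elim
    case (elim n)
    then show ?case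
      using flux'_integral_bounds[OF elim(1) less_imp_le[OF elim(2)] elim(3)] large_pos[OF elim(1)]
      by (simp add: q_def I_def)
  qed
  then show ?thesis
    using tendsto_sandwich[OF _ _ lower flux_tendsto[OF R, folded I_def]]
    by (simp add: eventually_conj_iff)
qed

lemma u_ratio_tendsto:
  assumes R: "0 < R"
  shows "(\<lambda>n. u n (gamma0 n * R) / mu n) \<longlonglongrightarrow> 1"
proof (rule LIM_zero_cancel, rule Lim_null_comparison)
  show "(\<lambda>n. Zbound R / gd t0 * inverse (mu n)) \<longlonglongrightarrow> 0"
    by (rule tendsto_mult_right_zero[OF tendsto_inverse_0_at_top[OF mu_lim]])
  show "\<forall>\<^sub>F n in sequentially. norm (u n (gamma0 n * R) / mu n - 1) \<le> Zbound R / gd t0 * inverse (mu n)"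
    using eventually_large eventually_gamma0_small[OF zero_less_one, of R]
  proof eventually_elim
    case (elim n)
    have "mu n - Zbound R / gd (mu n) \<le> u n (gamma0 n * R)" "u n (gamma0 n * R) \<le> mu n"
      using u_above_shift[OF elim(1), of R "gamma0 n * R"] u_le_mu gamma0_pos[OF elim(1)] R elim
      by auto
    moreover have "Zbound R / gd (mu n) \<le> Zbound R / gd t0"
      using gd_mono[of t0 "mu n"] gd_pos[of t0] Zbound_nonneg elim(1)
      by (intro divide_left_mono) (auto simp: large_def)
    ultimately have "\<bar>u n (gamma0 n * R) - mu n\<bar> / mu n \<le> Zbound R / gd t0 / mu n"
      using mu_pos[rule_format, of n] by (intro divide_right_mono) auto
    moreover have "u n (gamma0 n * R) / mu n - 1 = (u n (gamma0 n * R) - mu n) / mu n"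
      using mu_pos[rule_format, of n] by (simp add: field_simps)
    then have "\<bar>u n (gamma0 n * R) / mu n - 1\<bar> = \<bar>u n (gamma0 n * R) - mu n\<bar> / mu n"
      using mu_pos[rule_format, of n] by (simp add: abs_divide)
    ultimately show ?case
      by (simp add: divide_inverse)
  qed
qed

definition close_at_scale :: "real \<Rightarrow> real \<Rightarrow> nat \<Rightarrow> bool" where
  "close_at_scale R e n \<longleftrightarrow> 0 < gamma0 n \<and> gamma0 n * R < 1 \<and> gamma0 n * R \<le> e \<and>
    \<bar>C2_norm {0..R} (\<lambda>r. Z n r - bubble r)\<bar> \<le> e \<and>
    \<bar>gd (mu n) * integral {0..gamma0 n * R} (\<lambda>r. lam n * h r * f (u n r) * r) - 4 * R\<^sup>2 / (8 + R\<^sup>2)\<bar> \<le> e \<and>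
    \<bar>integral {0..gamma0 n * R} (\<lambda>r. lam n * h r * f' (u n r) * r) - 4 * R\<^sup>2 / (8 + R\<^sup>2)\<bar> \<le> e \<and>
    \<bar>u n (gamma0 n * R) / mu n - 1\<bar> \<le> e"

lemma eventually_close_at_scale:
  assumes R: "0 < R" and e: "0 < e"
  shows "eventually (close_at_scale R e) sequentially"
proof -
  have close: "\<forall>\<^sub>F n in sequentially. \<bar>X n - L\<bar> \<le> e" if "X \<longlonglongrightarrow> L" for X L
    using tendstoD[OF that e] by (auto simp: dist_real_def elim: eventually_mono)
  show ?thesis
    using eventually_large eventually_gamma0_small[OF zero_less_one, of R] eventually_gamma0_small[OF e, of R]
      close[OF C2_norm_Z_bubble_tendsto_0[OF R]] close[OF flux_tendsto[OF R]]
      close[OF flux'_tendsto[OF R]] close[OF u_ratio_tendsto[OF R]]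
  proof eventually_elim
    case (elim n)
    then show ?case
      unfolding close_at_scale_def using gamma0_pos[OF elim(1)] by (simp add: less_imp_le)
  qed
qed

lemma blowup_profile:
  "gamma0 \<longlonglongrightarrow> 0 \<and>
    (\<exists>s::nat \<Rightarrow> nat. strict_mono s \<and> (\<exists>\<rho>::nat \<Rightarrow> real.
       (\<forall>n. 0 < \<rho> n \<and> \<rho> n < 1) \<and>
       (\<lambda>n. u (s n) (\<rho> n) / mu (s n)) \<longlonglongrightarrow> 1 \<and>
       \<rho> \<longlonglongrightarrow> 0 \<and>
       filterlim (\<lambda>n. \<rho> n / gamma0 (s n)) at_top sequentially \<and>
       (\<lambda>n. C2_norm {0..\<rho> n / gamma0 (s n)} (\<lambda>r. Z (s n) r - bubble r)) \<longlonglongrightarrow> 0 \<and>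
       (\<lambda>n. gd (mu (s n)) * integral {0..\<rho> n} (\<lambda>r. lam (s n) * h r * f (u (s n) r) * r))
          \<longlonglongrightarrow> 4 \<and>
       (\<lambda>n. integral {0..\<rho> n} (\<lambda>r. lam (s n) * h r * f' (u (s n) r) * r))
          \<longlonglongrightarrow> 4))"
proof -
  define R where "R k = real k + 1" for k
  have R: "0 < R k" "0 < 1 / R k" for k
    by (simp_all add: R_def)
  obtain s where s: "strict_mono s" and close: "\<And>k. close_at_scale (R k) (1 / R k) (s k)"
    using eventually_diagonal_subseq[of "\<lambda>k. close_at_scale (R k) (1 / R k)"]
      eventually_close_at_scale[OF R] by blast
  define \<rho> where "\<rho> k = gamma0 (s k) * R k" for k
  note close = close[unfolded close_at_scale_def \<rho>_def[symmetric]]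
  have ratio: "\<rho> k / gamma0 (s k) = R k" for k
    using close[of k] by (simp add: \<rho>_def)
  have \<rho>: "0 < \<rho> k" "\<rho> k < 1" "\<rho> k \<le> 1 / R k" for k
    using close[of k] R(1)[of k] by (simp_all add: \<rho>_def)
  have limits: "(\<lambda>k. 1 / R k) \<longlonglongrightarrow> 0" "(\<lambda>k. 4 * (R k)\<^sup>2 / (8 + (R k)\<^sup>2)) \<longlonglongrightarrow> 4"
    "filterlim R at_top sequentially"
    unfolding R_def by real_asymp+
  show ?thesis
  proof (intro conjI exI[of _ s] exI[of _ \<rho>] s allI \<rho>(1,2) gamma0_tendsto_0)
    show "\<rho> \<longlonglongrightarrow> 0"
      using \<rho> by (intro tendsto_if_abs_diff_le[OF _ limits(1) tendsto_const]) (simp add: less_imp_le)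
    show "(\<lambda>k. u (s k) (\<rho> k) / mu (s k)) \<longlonglongrightarrow> 1"
      using close by (intro tendsto_if_abs_diff_le[OF _ limits(1) tendsto_const]) blast
    show "filterlim (\<lambda>k. \<rho> k / gamma0 (s k)) at_top sequentially"
      unfolding ratio by (rule limits(3))
    show "(\<lambda>k. C2_norm {0..\<rho> k / gamma0 (s k)} (\<lambda>r. Z (s k) r - bubble r)) \<longlonglongrightarrow> 0"
      unfolding ratio using close by (intro tendsto_if_abs_diff_le[OF _ limits(1) tendsto_const]) simp
    show "(\<lambda>k. gd (mu (s k)) * integral {0..\<rho> k} (\<lambda>r. lam (s k) * h r * f (u (s k) r) * r)) \<longlonglongrightarrow> 4"
      using close by (intro tendsto_if_abs_diff_le[OF _ limits(1,2)]) blast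
    show "(\<lambda>k. integral {0..\<rho> k} (\<lambda>r. lam (s k) * h r * f' (u (s k) r) * r)) \<longlonglongrightarrow> 4"
      using close by (intro tendsto_if_abs_diff_le[OF _ limits(1,2)]) blast
  qed
qed

end

theorem theorem1p1:
  fixes h h' f f' f'' gd gdd :: "real \<Rightarrow> real"
    and t0 :: real
    and lam mu :: "nat \<Rightarrow> real"
    and u u' u'' :: "nat \<Rightarrow> real \<Rightarrow> real"
  assumes h_pos: "\<forall>r\<in>{0..1}. h r > 0"
    and h_C1: "\<forall>r\<in>{0..1}. (h has_real_derivative h' r) (at r within {0..1})"
    and h'_cont: "continuous_on {0..1} h'"
    and f_nonneg: "\<forall>t\<ge>0. f t \<ge> 0"
    and f_C1: "\<forall>t\<ge>0. (f has_real_derivative f' t) (at t within {0..})"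
    and f'_cont: "continuous_on {0..} f'"
    and t0: "t0 \<ge> 0"
    and f_pos: "\<forall>t\<ge>t0. f t > 0"
    and f_C2: "\<forall>t\<ge>t0. (f' has_real_derivative f'' t) (at t within {t0..})"
    and f''_cont: "continuous_on {t0..} f''"
    and gd: "\<forall>t\<ge>t0. ((\<lambda>s. ln (f s)) has_real_derivative gd t) (at t within {t0..})"
    and gdd: "\<forall>t\<ge>t0. (gd has_real_derivative gdd t) (at t within {t0..})"
    and H1: "H1 f gd gdd t0"
    and lam_pos: "\<forall>n. lam n > 0"
    and mu_pos: "\<forall>n. mu n > 0"
    and u_d1: "\<forall>n. \<forall>r\<in>{0..1}. (u n has_real_derivative u' n r) (at r within {0..1})"
    and u_d2: "\<forall>n. \<forall>r\<in>{0..1}. (u' n has_real_derivative u'' n r) (at r within {0..1})"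
    and u''_cont: "\<forall>n. continuous_on {0..1} (u'' n)"
    and ode: "\<forall>n. \<forall>r\<in>{0<..<1}. - u'' n r - u' n r / r = lam n * h r * f (u n r)"
    and u_pos: "\<forall>n. \<forall>r\<in>{0<..<1}. u n r > 0"
    and bc: "\<forall>n. u n 0 = mu n \<and> u' n 0 = 0 \<and> u n 1 = 0"
    and mu_lim: "filterlim mu at_top sequentially"
  defines "\<gamma> \<equiv> (\<lambda>n. sqrt (1 / (lam n * h 0 * f' (mu n))))"
    and "z \<equiv> (\<lambda>n r. gd (mu n) * (u n (sqrt (1 / (lam n * h 0 * f' (mu n))) * r) - mu n))"
    and "z0 \<equiv> (\<lambda>r::real. ln (64 / (8 + r\<^sup>2)\<^sup>2))"
  shows "\<gamma> \<longlonglongrightarrow> 0 \<and>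
    (\<exists>s::nat \<Rightarrow> nat. strict_mono s \<and> (\<exists>\<rho>::nat \<Rightarrow> real.
       (\<forall>n. 0 < \<rho> n \<and> \<rho> n < 1) \<and>
       (\<lambda>n. u (s n) (\<rho> n) / mu (s n)) \<longlonglongrightarrow> 1 \<and>
       \<rho> \<longlonglongrightarrow> 0 \<and>
       filterlim (\<lambda>n. \<rho> n / \<gamma> (s n)) at_top sequentially \<and>
       (\<lambda>n. C2_norm {0..\<rho> n / \<gamma> (s n)} (\<lambda>r. z (s n) r - z0 r)) \<longlonglongrightarrow> 0 \<and>
       (\<lambda>n. gd (mu (s n)) * integral {0..\<rho> n} (\<lambda>r. lam (s n) * h r * f (u (s n) r) * r))
          \<longlonglongrightarrow> 4 \<and>
       (\<lambda>n. integral {0..\<rho> n} (\<lambda>r. lam (s n) * h r * f' (u (s n) r) * r))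
          \<longlonglongrightarrow> 4))"
proof -
  interpret radial_blowup h h' f f' gd gdd t0 lam mu u u' u''
    by unfold_locales (fact h_pos h_C1 f_nonneg f_C1 f'_cont t0 f_pos gd gdd H1 lam_pos mu_pos
        u_d1 u_d2 u''_cont ode u_pos bc mu_lim)+
  have "\<gamma> = gamma0" "z = Z" "z0 = bubble"
    by (simp_all add: \<gamma>_def gamma0_def z_def Z_def z0_def bubble_def fun_eq_iff)
  then show ?thesis
    using blowup_profile by simp
qed

end
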